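(* Let $U_1,U_2,\dots$ be i.i.d. almost surely positive random variables distributed as $U$ with tail function $Q(x)=\mathbb{P}(U>x)$, and assume $\mathbb{E}[U^2]<\infty$ and that there exist $\beta\in(0,1/2)$ and $x_0>0$ in the interior of the support of $U$ such that $Q^{1/2-\beta}$ is convex on $[x_0,\infty)$. Let $V_1\le\dots\le V_N$ be the order statistics of $(U_1,\dots,U_N)$ and let $Q^{-1}(y)=\inf\{x>0:\ Q(x)\le y\}$ for $y\in(0,1)$. For any function $h$ on $\mathbb{R}_+$ with $\lim_{x\to+\infty}h(x)=+\infty$, set \[a^h_N=\begin{cases}Q^{-1}\big(\tfrac{h(N)}{N}\big)&\text{if }\tfrac{h(N)}N<1,\\ 0&\text{otherwise,}\end{cases}\qquad b^h_N=Q^{-1}\Big(\frac1{Nh(N)}\Big),\qquad A^h_N=\{a^h_N\le V_{N-1}\le V_N\le b^h_N\}.\] Then $\lim_{N\to\infty}\mathbb{P}(A^h_N)=1$. *)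

theory Defs
  imports "HOL-Probability.Probability"
begin

definition tail :: "'a measure \<Rightarrow> ('a \<Rightarrow> real) \<Rightarrow> real \<Rightarrow> real" where
  "tail M X x = measure M {\<omega> \<in> space M. X \<omega> > x}"

definition tail_inv :: "(real \<Rightarrow> real) \<Rightarrow> real \<Rightarrow> real" where
  "tail_inv Q y = Inf {x. x > 0 \<and> Q x \<le> y}"

definition rv_support :: "'a measure \<Rightarrow> ('a \<Rightarrow> real) \<Rightarrow> real set" where
  "rv_support M X = {x. \<forall>e>0. measure M {\<omega> \<in> space M. \<bar>X \<omega> - x\<bar> < e} > 0}"

(* k-th order statistic (1-based, increasing) of U 0, ..., U (N-1) *)
definition order_stat :: "(nat \<Rightarrow> 'a \<Rightarrow> real) \<Rightarrow> nat \<Rightarrow> nat \<Rightarrow> 'a \<Rightarrow> real" where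
  "order_stat U N k \<omega> = sort (map (\<lambda>i. U i \<omega>) [0..<N]) ! (k - 1)"

end

theory Submission
  imports Defs
begin

text \<open>
  The event \<open>A\<^sup>h\<^sub>N\<close> fails only if at most one of \<open>U\<^sub>1, \<dots>, U\<^sub>N\<close> reaches
  \<open>a\<^sub>N\<close>, or some \<open>U\<^sub>i\<close> exceeds \<open>b\<^sub>N\<close>. Since \<open>q = P(U \<ge> a\<^sub>N) \<ge> min (h(N)/N) 1\<close>,
  independence bounds the first probability by
  \<open>(1 - q)^N + N q (1 - q)^(N-1) \<le> 2 e exp(- min (h(N)) N / 2)\<close>,
  and the union bound gives \<open>N Q(b\<^sub>N) \<le> 1 / h(N)\<close> for the second; both tend to \<open>0\<close>.
\<close>

lemma sorted_nth_from_end_iff: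
  fixes xs :: "'a::linorder list"
  assumes "sorted xs" "1 \<le> k" "k \<le> length xs"
    and up: "\<And>x y. x \<le> y \<Longrightarrow> P x \<Longrightarrow> P y"
  shows "P (xs ! (length xs - k)) \<longleftrightarrow> k \<le> card {i. i < length xs \<and> P (xs ! i)}"
proof
  assume "P (xs ! (length xs - k))"
  then have "P (xs ! i)" if "length xs - k \<le> i" "i < length xs" for i
    using up sorted_nth_mono[OF assms(1) that] by blast
  then have "{length xs - k..<length xs} \<subseteq> {i. i < length xs \<and> P (xs ! i)}" by auto
  from card_mono[OF _ this] show "k \<le> card {i. i < length xs \<and> P (xs ! i)}"
    using assms(3) by simp
next
  assume k: "k \<le> card {i. i < length xs \<and> P (xs ! i)}"
  show "P (xs ! (length xs - k))"
  proof (rule ccontr)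
    assume "\<not> P (xs ! (length xs - k))"
    moreover have "length xs - k < length xs" using assms(2,3) by simp
    ultimately have "\<not> P (xs ! i)" if "i \<le> length xs - k" for i
      using up sorted_nth_mono[OF assms(1) that] by blast
    then have "{i. i < length xs \<and> P (xs ! i)} \<subseteq> {length xs - k<..<length xs}"
      by (auto simp: not_le[symmetric])
    from card_mono[OF _ this] have "card {i. i < length xs \<and> P (xs ! i)} < k"
      using assms(2,3) by simp
    with k show False by simp
  qed
qed

lemma order_stat_from_top_iff:
  assumes "1 \<le> k" "k \<le> N" and up: "\<And>x y. x \<le> y \<Longrightarrow> P x \<Longrightarrow> P y"
  shows "P (order_stat U N (Suc N - k) \<omega>) \<longleftrightarrow> k \<le> card {i\<in>{..<N}. P (U i \<omega>)}"
proof -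
  let ?xs = "map (\<lambda>i. U i \<omega>) [0..<N]"
  have "card {i. i < N \<and> P (sort ?xs ! i)} = length (filter P (sort ?xs))"
    by (simp add: length_filter_conv_card)
  also have "\<dots> = length (filter P ?xs)"
    by (metis mset_filter mset_sort size_mset)
  also have "\<dots> = card {i\<in>{..<N}. P (U i \<omega>)}"
    by (simp add: length_filter_conv_card) (intro arg_cong[where f=card], auto)
  finally have "card {i. i < N \<and> P (sort ?xs ! i)} = card {i\<in>{..<N}. P (U i \<omega>)}" .
  moreover have "Suc N - k - 1 = N - k" by simp
  ultimately show ?thesis
    using sorted_nth_from_end_iff[of "sort ?xs" k P] assms unfolding order_stat_def by simp
qed

lemma order_stat_mono:
  assumes "1 \<le> j" "j \<le> k" "k \<le> N"
  shows "order_stat U N j \<omega> \<le> order_stat U N k \<omega>"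
  unfolding order_stat_def using assms by (intro sorted_nth_mono) auto

lemma top_two_order_stats_between_iff:
  assumes N: "2 \<le> N"
  shows "a \<le> order_stat U N (N - 1) \<omega> \<and> order_stat U N (N - 1) \<omega> \<le> order_stat U N N \<omega>
      \<and> order_stat U N N \<omega> \<le> b
    \<longleftrightarrow> 2 \<le> card {i\<in>{..<N}. a \<le> U i \<omega>} \<and> (\<forall>i<N. U i \<omega> \<le> b)"
proof -
  have "a \<le> order_stat U N (N - 1) \<omega> \<longleftrightarrow> 2 \<le> card {i\<in>{..<N}. a \<le> U i \<omega>}"
    using order_stat_from_top_iff[of 2 N "\<lambda>x. a \<le> x" U \<omega>] N by simp
  moreover have "b < order_stat U N N \<omega> \<longleftrightarrow> 1 \<le> card {i\<in>{..<N}. b < U i \<omega>}"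
    using order_stat_from_top_iff[of 1 N "\<lambda>x. b < x" U \<omega>] N by simp
  moreover have "1 \<le> card {i\<in>{..<N}. b < U i \<omega>} \<longleftrightarrow> (\<exists>i<N. b < U i \<omega>)"
    by (auto simp: Suc_le_eq card_gt_0_iff)
  moreover have "order_stat U N (N - 1) \<omega> \<le> order_stat U N N \<omega>"
    using N by (intro order_stat_mono) auto
  ultimately show ?thesis by (auto simp: not_less)
qed

lemma binomial_at_most_one_le_exp:
  fixes q :: real
  assumes q: "0 \<le> q" "q \<le> 1"
  shows "(1 - q) ^ N + real N * q * (1 - q) ^ (N - 1) \<le> 2 * exp 1 * exp (- (real N * q) / 2)"
proof (cases "N = 0")
  case True
  then show ?thesis using exp_ge_add_one_self[of 1] by simp
next
  case False
  let ?x = "real N * q"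
  have "(1 - q) ^ N \<le> (1 - q) ^ (N - 1)" using q by (intro power_decreasing) auto
  then have "(1 - q) ^ N + ?x * (1 - q) ^ (N - 1) \<le> (1 + ?x) * (1 - q) ^ (N - 1)"
    by (simp add: algebra_simps)
  also have "(1 - q) ^ (N - 1) \<le> exp (- q) ^ (N - 1)"
    using q by (intro power_mono) (auto simp: exp_ge_add_one_self[of "-q", simplified])
  also have "exp (- q) ^ (N - 1) = exp (q - ?x)"
    using False by (simp add: exp_of_nat_mult[symmetric] of_nat_diff algebra_simps)
  also have "exp (q - ?x) \<le> exp 1 * exp (- ?x)"
    using q by (simp add: exp_diff[symmetric] exp_add[symmetric])
  also have "1 + ?x \<le> 2 * exp (?x / 2)"
    using exp_ge_add_one_self[of "?x / 2"] by linarith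
  also have "2 * exp (?x / 2) * (exp 1 * exp (- ?x)) = 2 * exp 1 * exp (- ?x / 2)"
    by (simp add: exp_add[symmetric] mult_ac)
  finally show ?thesis using q by (simp add: mult_left_mono)
qed

lemma filterlim_min_at_top:
  fixes f g :: "'a \<Rightarrow> 'b::linorder"
  assumes "filterlim f at_top F" and "filterlim g at_top F"
  shows "filterlim (\<lambda>x. min (f x) (g x)) at_top F"
  unfolding filterlim_at_top
proof
  fix Z
  have "\<forall>\<^sub>F x in F. Z \<le> f x" "\<forall>\<^sub>F x in F. Z \<le> g x"
    using assms unfolding filterlim_at_top by blast+
  then show "\<forall>\<^sub>F x in F. Z \<le> min (f x) (g x)" by eventually_elim simp
qed

lemma tendsto_exp_neg_divide_at_top:
  fixes g :: "'a \<Rightarrow> real"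
  assumes "filterlim g at_top F" and "0 < c"
  shows "((\<lambda>x. exp (- g x / c)) \<longlongrightarrow> 0) F"
proof -
  have "filterlim (\<lambda>x. inverse c * g x) at_top F"
    using assms by (intro filterlim_tendsto_pos_mult_at_top[OF tendsto_const]) simp_all
  then have "filterlim (\<lambda>x. - g x / c) at_bot F"
    by (simp add: filterlim_uminus_at_top divide_inverse mult.commute)
  then show ?thesis
    by (rule filterlim_compose[OF exp_at_bot])
qed

context prob_space
begin

lemma tail_eq_cdf:
  assumes "X \<in> borel_measurable M"
  shows "tail M X = (\<lambda>x. 1 - cdf (distr M borel X) x)"
proof
  fix x
  have "{\<omega> \<in> space M. X \<omega> > x} = space M - X -` {..x} \<inter> space M" by auto
  then show "tail M X x = 1 - cdf (distr M borel X) x"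
    using assms by (simp add: tail_def cdf_def measure_distr prob_compl)
qed

lemma tail_antimono:
  assumes "X \<in> borel_measurable M" and "x \<le> y"
  shows "tail M X y \<le> tail M X x"
proof -
  interpret D: real_distribution "distr M borel X" using assms by simp
  show ?thesis
    unfolding tail_eq_cdf[OF assms(1)] using D.cdf_nondecreasing[OF \<open>x \<le> y\<close>] by simp
qed

lemma tail_tendsto_at_right:
  assumes "X \<in> borel_measurable M"
  shows "(tail M X \<longlongrightarrow> tail M X x) (at_right x)"
proof -
  interpret D: real_distribution "distr M borel X" using assms by simp
  show ?thesis
    unfolding tail_eq_cdf[OF assms]
    using D.cdf_is_right_cont[of x] unfolding continuous_within by (intro tendsto_diff tendsto_const)
qed

lemma tail_tendsto_at_left:
  assumes "X \<in> borel_measurable M"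
  shows "(tail M X \<longlongrightarrow> prob {\<omega> \<in> space M. X \<omega> \<ge> x}) (at_left x)"
proof -
  interpret D: real_distribution "distr M borel X" using assms by simp
  have "{\<omega> \<in> space M. X \<omega> \<ge> x} = space M - X -` {..<x} \<inter> space M" by auto
  also have "prob \<dots> = 1 - prob (X -` {..<x} \<inter> space M)"
    using assms by (intro prob_compl) simp
  also have "prob (X -` {..<x} \<inter> space M) = measure (distr M borel X) {..<x}"
    using assms by (simp add: measure_distr)
  finally have eq: "prob {\<omega> \<in> space M. X \<omega> \<ge> x} = 1 - measure (distr M borel X) {..<x}" .
  show ?thesis
    unfolding tail_eq_cdf[OF assms] eq by (rule tendsto_diff[OF tendsto_const D.cdf_at_left])
qed

lemma tail_tendsto_at_top:
  assumes "X \<in> borel_measurable M"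
  shows "(tail M X \<longlongrightarrow> 0) at_top"
proof -
  interpret D: real_distribution "distr M borel X" using assms by simp
  show ?thesis
    unfolding tail_eq_cdf[OF assms]
    using tendsto_diff[OF tendsto_const D.cdf_lim_at_top_prob, of 1] by simp
qed

lemma tail_eq_1_of_nonpos:
  assumes X: "X \<in> borel_measurable M" and pos: "AE \<omega> in M. X \<omega> > 0" and "x \<le> 0"
  shows "tail M X x = 1"
proof -
  have "AE \<omega> in M. X \<omega> > x" using pos by (rule AE_mp) (use \<open>x \<le> 0\<close> in auto)
  then show ?thesis unfolding tail_def using X by (subst prob_Collect_eq_1) auto
qed

text \<open>The infimum defining \<open>tail_inv\<close> need not be attained; right-continuity of the tail
  function transfers the bound to it.\<close>

lemma tail_tail_inv_le:
  assumes X: "X \<in> borel_measurable M" and "y > 0"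
  shows "tail M X (tail_inv (tail M X) y) \<le> y"
proof -
  let ?S = "{x. x > 0 \<and> tail M X x \<le> y}"
  have "\<forall>\<^sub>F x in at_top. x > 0 \<and> tail M X x \<le> y"
    using eventually_gt_at_top[of 0] order_tendstoD(2)[OF tail_tendsto_at_top[OF X] \<open>y > 0\<close>]
    by eventually_elim auto
  then have "?S \<noteq> {}" by (auto simp: eventually_at_top_linorder)
  have le: "tail M X x \<le> y" if gt: "x > tail_inv (tail M X) y" for x
  proof -
    obtain s where "s \<in> ?S" "s < x"
      using cInf_lessD[OF \<open>?S \<noteq> {}\<close>] gt unfolding tail_inv_def by blast
    then show ?thesis using tail_antimono[OF X, of s x] by simp
  qed
  have "\<forall>\<^sub>F x in at_right (tail_inv (tail M X) y). tail M X x \<le> y"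
    using eventually_at_right_less by (rule eventually_mono) (rule le)
  then show ?thesis
    by (rule tendsto_upperbound[OF tail_tendsto_at_right[OF X]]) simp
qed

lemma tail_ge_below_tail_inv:
  assumes X: "X \<in> borel_measurable M" and "y \<le> 1"
    and pos: "AE \<omega> in M. X \<omega> > 0" and "x < tail_inv (tail M X) y"
  shows "y \<le> tail M X x"
proof (cases "x > 0")
  case True
  show ?thesis
  proof (rule ccontr)
    assume "\<not> y \<le> tail M X x"
    with True have "x \<in> {x. x > 0 \<and> tail M X x \<le> y}" by simp
    then have "tail_inv (tail M X) y \<le> x"
      unfolding tail_inv_def by (rule cInf_lower) (intro bdd_belowI[of _ 0], simp)
    with \<open>x < tail_inv (tail M X) y\<close> show False by simp
  qed
next
  case False
  then show ?thesis using tail_eq_1_of_nonpos[OF X pos] \<open>y \<le> 1\<close> by simp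
qed

lemma prob_ge_tail_inv_lower_bound:
  assumes X: "X \<in> borel_measurable M" and pos: "AE \<omega> in M. X \<omega> > 0" and "y > 0"
  shows "min y 1 \<le> prob {\<omega> \<in> space M. (if y < 1 then tail_inv (tail M X) y else 0) \<le> X \<omega>}"
proof (rule tendsto_lowerbound[OF tail_tendsto_at_left[OF X]])
  let ?a = "if y < 1 then tail_inv (tail M X) y else 0"
  have le: "min y 1 \<le> tail M X x" if "x < ?a" for x
  proof (cases "y < 1")
    case True
    with that show ?thesis using tail_ge_below_tail_inv[OF X _ pos] by simp
  next
    case False
    with that show ?thesis using tail_eq_1_of_nonpos[OF X pos] by simp
  qed
  show "\<forall>\<^sub>F x in at_left ?a. min y 1 \<le> tail M X x"
    by (rule eventually_mono[OF eventually_at_left_real[of "?a - 1" ?a]]) (auto intro: le)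
qed simp

lemma prob_vimage_eq_of_distr_eq:
  assumes "X \<in> borel_measurable M" "Y \<in> borel_measurable M"
    and "distr M borel X = distr M borel Y" and "B \<in> sets borel"
  shows "prob (X -` B \<inter> space M) = prob (Y -` B \<inter> space M)"
  using assms measure_distr[of X M borel B] measure_distr[of Y M borel B] by simp

lemma prob_at_most_one_le:
  fixes U :: "nat \<Rightarrow> 'a \<Rightarrow> real"
  assumes indep: "indep_vars (\<lambda>_. borel) U UNIV"
    and ident: "\<And>i. distr M borel (U i) = distr M borel (U 0)"
    and S: "S \<in> sets borel"
  defines "q \<equiv> prob (U 0 -` S \<inter> space M)"
  shows "prob {\<omega> \<in> space M. card {i\<in>{..<N}. U i \<omega> \<in> S} \<le> 1}
    \<le> (1 - q) ^ N + real N * q * (1 - q) ^ (N - 1)"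
proof (cases "N = 0")
  case True
  then show ?thesis by simp
next
  case False
  have meas[measurable]: "U i \<in> borel_measurable M" for i
    using indep unfolding indep_vars_def by simp
  \<comment> \<open>\<open>F j\<close> for \<open>j < N\<close>: exactly \<open>U j\<close> lies in \<open>S\<close>; \<open>F N\<close>: none does.\<close>
  let ?A = "\<lambda>j i. if i = j then S else - S"
  define F where "F j = (\<Inter>i\<in>{..<N}. U i -` ?A j i \<inter> space M)" for j
  have prob_U: "prob (U i -` ?A j i \<inter> space M) = (if i = j then q else 1 - q)" for i j
  proof -
    have "prob (U 0 -` (- S) \<inter> space M) = prob (space M - (U 0 -` S \<inter> space M))"
      by (rule arg_cong[where f = prob]) auto
    then have "prob (U 0 -` (- S) \<inter> space M) = 1 - q"
      using S unfolding q_def by (simp add: prob_compl)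
    then show ?thesis
      using prob_vimage_eq_of_distr_eq[OF meas meas ident, of "?A j i" i] S q_def by auto
  qed
  have prob_F: "prob (F j) = (if j < N then q * (1 - q) ^ (N - 1) else (1 - q) ^ N)" for j
  proof -
    have "prob (F j) = (\<Prod>i\<in>{..<N}. prob (U i -` ?A j i \<inter> space M))"
      unfolding F_def using False S by (intro indep_varsD[OF indep]) auto
    also have "\<dots> = (\<Prod>i\<in>{..<N}. if i = j then q else 1 - q)"
      using prob_U by simp
    finally show ?thesis by (simp add: prod_gen_delta)
  qed
  have F_sets: "F j \<in> sets M" for j
    unfolding F_def using False S by (intro sets.finite_INT) auto
  have "{\<omega> \<in> space M. card {i\<in>{..<N}. U i \<omega> \<in> S} \<le> 1} \<subseteq> F N \<union> (\<Union>j<N. F j)"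
  proof
    fix \<omega> assume "\<omega> \<in> {\<omega> \<in> space M. card {i\<in>{..<N}. U i \<omega> \<in> S} \<le> 1}"
    then have \<omega>: "\<omega> \<in> space M" and card: "card {i\<in>{..<N}. U i \<omega> \<in> S} \<le> 1" by auto
    show "\<omega> \<in> F N \<union> (\<Union>j<N. F j)"
    proof (cases "\<omega> \<in> F N")
      case False
      then obtain j where "j < N" "\<omega> \<notin> U j -` ?A N j \<inter> space M" unfolding F_def by blast
      with \<omega> have j: "j < N" "U j \<omega> \<in> S" by auto
      then have "U i \<omega> \<notin> S" if "i < N" "i \<noteq> j" for i
        using card that by (auto simp: card_le_Suc0_iff_eq)
      with j \<omega> have "\<omega> \<in> F j" unfolding F_def by auto
      with j show ?thesis by blast
    qed simp
  qed
  then have "prob {\<omega> \<in> space M. card {i\<in>{..<N}. U i \<omega> \<in> S} \<le> 1} \<le> prob (F N \<union> (\<Union>j<N. F j))"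
    using F_sets by (intro finite_measure_mono) auto
  also have "\<dots> \<le> prob (F N) + prob (\<Union>j<N. F j)"
    using F_sets by (intro measure_Un_le) auto
  also have "\<dots> \<le> prob (F N) + (\<Sum>j<N. prob (F j))"
    using F_sets by (intro add_left_mono finite_measure_subadditive_finite) auto
  also have "\<dots> = (1 - q) ^ N + real N * q * (1 - q) ^ (N - 1)"
    using prob_F by simp
  finally show ?thesis .
qed

lemma prob_top_two_order_stats_between:
  fixes U :: "nat \<Rightarrow> 'a \<Rightarrow> real"
  assumes indep: "indep_vars (\<lambda>_. borel) U UNIV"
    and ident: "\<And>i. distr M borel (U i) = distr M borel (U 0)"
    and N: "2 \<le> N"
  shows "1 - 2 * exp 1 * exp (- (real N * prob {\<omega> \<in> space M. a \<le> U 0 \<omega>}) / 2)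
      - real N * tail M (U 0) b
    \<le> prob {\<omega> \<in> space M. a \<le> order_stat U N (N - 1) \<omega>
        \<and> order_stat U N (N - 1) \<omega> \<le> order_stat U N N \<omega> \<and> order_stat U N N \<omega> \<le> b}"
proof -
  have meas[measurable]: "U i \<in> borel_measurable M" for i
    using indep unfolding indep_vars_def by simp
  define L where "L = {\<omega> \<in> space M. card {i\<in>{..<N}. U i \<omega> \<in> {a..}} \<le> 1}"
  define R where "R = (\<Union>i<N. U i -` {b<..} \<inter> space M)"
  have "L = {\<omega> \<in> space M. \<forall>i<N. \<forall>j<N. a \<le> U i \<omega> \<and> a \<le> U j \<omega> \<longrightarrow> i = j}"
    unfolding L_def by (auto simp: card_le_Suc0_iff_eq)
  also have "\<dots> \<in> sets M" by measurable
  finally have L_sets: "L \<in> sets M" .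
  have R_sets: "R \<in> sets M" unfolding R_def by measurable
  have G_eq: "{\<omega> \<in> space M. a \<le> order_stat U N (N - 1) \<omega>
        \<and> order_stat U N (N - 1) \<omega> \<le> order_stat U N N \<omega> \<and> order_stat U N N \<omega> \<le> b}
      = space M - (L \<union> R)"
    unfolding top_two_order_stats_between_iff[OF N] L_def R_def by (auto simp: not_le)
  have "prob L \<le> 2 * exp 1 * exp (- (real N * prob {\<omega> \<in> space M. a \<le> U 0 \<omega>}) / 2)"
  proof -
    have "U 0 -` {a..} \<inter> space M = {\<omega> \<in> space M. a \<le> U 0 \<omega>}" by auto
    then show ?thesis
      using prob_at_most_one_le[OF indep ident, of "{a..}" N]
        binomial_at_most_one_le_exp[of "prob {\<omega> \<in> space M. a \<le> U 0 \<omega>}" N]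
      unfolding L_def by simp
  qed
  moreover have "prob R \<le> real N * tail M (U 0) b"
  proof -
    have "prob R \<le> (\<Sum>i<N. prob (U i -` {b<..} \<inter> space M))"
      unfolding R_def by (intro finite_measure_subadditive_finite) auto
    also have "\<dots> = (\<Sum>i<N. prob (U 0 -` {b<..} \<inter> space M))"
      by (intro sum.cong refl prob_vimage_eq_of_distr_eq[OF meas meas ident]) simp
    also have "\<dots> = real N * prob (U 0 -` {b<..} \<inter> space M)" by simp
    also have "U 0 -` {b<..} \<inter> space M = {\<omega> \<in> space M. U 0 \<omega> > b}" by auto
    finally show ?thesis unfolding tail_def .
  qed
  moreover have "prob (space M - (L \<union> R)) = 1 - prob (L \<union> R)"
    using L_sets R_sets by (intro prob_compl) auto
  moreover have "prob (L \<union> R) \<le> prob L + prob R"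
    using L_sets R_sets by (intro measure_Un_le)
  ultimately show ?thesis unfolding G_eq by linarith
qed

lemma prob_top_two_order_stats_quantile_bounds:
  fixes U :: "nat \<Rightarrow> 'a \<Rightarrow> real"
  assumes indep: "indep_vars (\<lambda>_. borel) U UNIV"
    and ident: "\<And>i. distr M borel (U i) = distr M borel (U 0)"
    and pos: "AE \<omega> in M. U 0 \<omega> > 0"
    and N: "2 \<le> N" and c: "0 < c"
  shows "1 - 2 * exp 1 * exp (- min c (real N) / 2) - 1 / c
    \<le> prob {\<omega> \<in> space M.
        (if c / real N < 1 then tail_inv (tail M (U 0)) (c / real N) else 0) \<le> order_stat U N (N - 1) \<omega>
        \<and> order_stat U N (N - 1) \<omega> \<le> order_stat U N N \<omega>
        \<and> order_stat U N N \<omega> \<le> tail_inv (tail M (U 0)) (1 / (real N * c))}"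
proof -
  have meas: "U 0 \<in> borel_measurable M"
    using indep unfolding indep_vars_def by simp
  let ?a = "if c / real N < 1 then tail_inv (tail M (U 0)) (c / real N) else 0"
  let ?b = "tail_inv (tail M (U 0)) (1 / (real N * c))"
  let ?q = "prob {\<omega> \<in> space M. ?a \<le> U 0 \<omega>}"
  have "real N * min (c / real N) 1 \<le> real N * ?q"
    using prob_ge_tail_inv_lower_bound[OF meas pos, of "c / real N"] N c
    by (intro mult_left_mono) simp_all
  moreover have "real N * min (c / real N) 1 = min c (real N)"
    using N by (simp add: min_mult_distrib_left)
  ultimately have "2 * exp 1 * exp (- (real N * ?q) / 2) \<le> 2 * exp 1 * exp (- min c (real N) / 2)"
    by simp
  moreover have "real N * tail M (U 0) ?b \<le> real N * (1 / (real N * c))"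
    using tail_tail_inv_le[OF meas, of "1 / (real N * c)"] N c by (intro mult_left_mono) simp_all
  moreover have "real N * (1 / (real N * c)) = 1 / c"
    using N by simp
  ultimately show ?thesis
    using prob_top_two_order_stats_between[OF indep ident N, of ?a ?b] by linarith
qed

lemma tendsto_prob_one:
  assumes "\<forall>\<^sub>F n in F. g n \<le> prob (A n)" and "(g \<longlongrightarrow> 1) F"
  shows "((\<lambda>n. prob (A n)) \<longlongrightarrow> 1) F"
  by (rule tendsto_sandwich[OF assms(1) _ assms(2) tendsto_const]) simp

end

theorem lemma2:
  fixes M :: "'a measure" and U :: "nat \<Rightarrow> 'a \<Rightarrow> real"
    and h :: "real \<Rightarrow> real" and \<beta> x0 :: real
  assumes "prob_space M"
    and indep: "prob_space.indep_vars M (\<lambda>_. borel) U UNIV"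
    and ident: "\<And>i. distr M borel (U i) = distr M borel (U 0)"
    and pos: "AE \<omega> in M. U 0 \<omega> > 0"
    and sq: "integrable M (\<lambda>\<omega>. (U 0 \<omega>)^2)"
    and \<beta>: "0 < \<beta>" "\<beta> < 1/2"
    and x0: "x0 > 0" "x0 \<in> interior (rv_support M (U 0))"
    and cvx: "convex_on {x0..} (\<lambda>x. (tail M (U 0) x) powr (1/2 - \<beta>))"
    and h: "filterlim h at_top at_top"
  shows "(\<lambda>N. measure M {\<omega> \<in> space M.
            (if h (real N) / real N < 1 then tail_inv (tail M (U 0)) (h (real N) / real N) else 0)
              \<le> order_stat U N (N - 1) \<omega>
            \<and> order_stat U N (N - 1) \<omega> \<le> order_stat U N N \<omega>
            \<and> order_stat U N N \<omega> \<le> tail_inv (tail M (U 0)) (1 / (real N * h (real N)))})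
         \<longlonglongrightarrow> 1"
proof -
  interpret prob_space M by fact
  have hN: "filterlim (\<lambda>N. h (real N)) at_top sequentially"
    using h filterlim_real_sequentially by (rule filterlim_compose)
  show ?thesis
  proof (rule tendsto_prob_one[of "\<lambda>N. 1 - 2 * exp 1 * exp (- min (h (real N)) (real N) / 2) - 1 / h (real N)"],
      goal_cases)
    case 1
    have "\<forall>\<^sub>F N in sequentially. 2 \<le> N \<and> 0 < h (real N)"
      using eventually_ge_at_top[of 2] filterlim_at_top_dense[THEN iffD1, OF hN, rule_format, of 0]
      by eventually_elim simp
    then show ?case
      by eventually_elim (intro prob_top_two_order_stats_quantile_bounds[OF indep ident pos], simp_all)
  next
    case 2
    have "(\<lambda>N. exp (- min (h (real N)) (real N) / 2)) \<longlonglongrightarrow> 0"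
      by (intro tendsto_exp_neg_divide_at_top filterlim_min_at_top hN filterlim_real_sequentially) simp
    from tendsto_mult_left[OF this, of "2 * exp 1"]
    have "(\<lambda>N. 2 * exp 1 * exp (- min (h (real N)) (real N) / 2)) \<longlonglongrightarrow> 0" by simp
    moreover have "(\<lambda>N. 1 / h (real N)) \<longlonglongrightarrow> 0"
      using tendsto_inverse_0_at_top[OF hN] by (simp add: inverse_eq_divide)
    ultimately have "(\<lambda>N. 1 - 2 * exp 1 * exp (- min (h (real N)) (real N) / 2) - 1 / h (real N))
        \<longlonglongrightarrow> 1 - 0 - 0"
      by (rule tendsto_diff[OF tendsto_diff[OF tendsto_const]])
    then show ?case by simp
  qed
qed

end
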